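(* Let $n,k$ be integers with $1\le k<n$, let $F$ be a finite field with $|F|\ge 2n$, and let $\{\lambda_{i,j}: i\in[n],\ j\in\{0,1\}\}$ be $2n$ distinct elements of $F$. Let $\mathcal{C}$ be the set of all tuples $C=(C_1,\dots,C_n)$ with $C_i=(c_{i,b,a}: b\in\{1,2,3\},\ a\in\{0,1,\dots,2^n-1\})\in F^{3\cdot 2^n}$ satisfying $$\sum_{i=1}^n \lambda_{i,a_i}^t\, c_{i,b,a}=0\quad\text{for all } t\in\{0,1,\dots,n-k-1\},\ b\in\{1,2,3\},\ a\in\{0,1,\dots,2^n-1\},$$ where $(a_1,\dots,a_n)\in\{0,1\}^n$ is the $n$-digit binary expansion of $a$. Then $\mathcal{C}$ is an $(n,k,l=3\cdot 2^n)$ MDS array code which is a $(2,k+1)$-MSR code under the cooperative model, i.e. for every $\mathcal{F}\subseteq[n]$ with $|\mathcal{F}|=2$ and every $\mathcal{R}\subseteq[n]\setminus\mathcal{F}$ with $|\mathcal{R}|=k+1$, the nodes $\{C_i:i\in\mathcal{F}\}$ can be cooperatively repaired from $\{C_j: j\in\mathcal{R}\}$ with total bandwidth $\frac{2(k+2)l}{3}=2(k+2)2^n$ symbols of $F$.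
   Context: $[n]=\{1,\dots,n\}$. An $(n,k,l)$ MDS array code over $F$ is a set of codewords $C=(C_1,\dots,C_n)$ with each node $C_i\in F^l$, forming an $F$-linear code of dimension $kl$, such that the contents of any $k$ nodes determine the whole codeword. Cooperative repair model: given a set $\mathcal{F}$ of failed nodes and a disjoint set $\mathcal{R}$ of helper nodes, each failed node downloads symbols of $F$ computed from the contents of the helper nodes, and the failed nodes may additionally exchange symbols of $F$ computed from the data they hold (their downloaded data) with each other; at the end each failed node $C_i$, $i\in\mathcal{F}$, must be able to recover its full content. $N_{\mathrm{co}}(\mathcal{C},\mathcal{F},\mathcal{R})$ is the minimum, over such schemes, of the total number of symbols of $F$ transmitted between any two distinct nodes (helper-to-failed and failed-to-failed). A code $\mathcal{C}$ is an $(h,d)$-MSR code under the cooperative model if it is an MDS array code and for all $\mathcal{F}\subseteq[n]$, $|\mathcal{F}|=h$, and $\mathcal{R}\subseteq[n]\setminus\mathcal{F}$, $|\mathcal{R}|=d$, one has $N_{\mathrm{co}}(\mathcal{C},\mathcal{F},\mathcal{R})=\frac{h(d+h-1)l}{h+d-k}$ (this value is a known lower bound for any MDS array code). *)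

theory Defs
  imports Complex_Main "HOL-Library.Function_Algebras"
begin

text \<open>An array codeword with n nodes, each node holding l symbols, is encoded as a
function c :: nat => nat => 'f, where c i j is the j-th symbol of node i
(i in {1..n}, j in {0..<l}); it is zero outside this range.\<close>

definition array_space :: "nat \<Rightarrow> nat \<Rightarrow> (nat \<Rightarrow> nat \<Rightarrow> 'f::zero) set" where
  "array_space n l = {c. \<forall>i j. (i \<notin> {1..n} \<or> l \<le> j) \<longrightarrow> c i j = 0}"

definition fscale :: "'f::field \<Rightarrow> (nat \<Rightarrow> nat \<Rightarrow> 'f) \<Rightarrow> (nat \<Rightarrow> nat \<Rightarrow> 'f)" where
  "fscale x c = (\<lambda>i j. x * c i j)"

definition MDS_array_code :: "nat \<Rightarrow> nat \<Rightarrow> nat \<Rightarrow> (nat \<Rightarrow> nat \<Rightarrow> 'f::field) set \<Rightarrow> bool" where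
  "MDS_array_code n k l C \<longleftrightarrow>
     C \<subseteq> array_space n l \<and>
     module.subspace fscale C \<and>
     vector_space.dim fscale C = k * l \<and>
     (\<forall>K. K \<subseteq> {1..n} \<and> card K = k \<longrightarrow>
        (\<forall>c\<in>C. \<forall>c'\<in>C. (\<forall>i\<in>K. c i = c' i) \<longrightarrow> c = c'))"

text \<open>Data downloaded by failed node i from the helpers in Rs, where g j i maps the
content of helper j to the list of symbols it sends to i.\<close>
definition downloaded ::
  "(nat \<Rightarrow> nat \<Rightarrow> (nat \<Rightarrow> 'f) \<Rightarrow> 'f list) \<Rightarrow> nat set \<Rightarrow> nat \<Rightarrow> (nat \<Rightarrow> nat \<Rightarrow> 'f) \<Rightarrow> (nat \<Rightarrow> 'f list)" where
  "downloaded g Rs i c = (\<lambda>j. if j \<in> Rs then g j i (c j) else [])"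

text \<open>Cooperative repair of the failed nodes Fs from helpers Rs with total bandwidth N:
helper j sends beta j i symbols (a function of its content) to failed node i;
failed node i sends gamma i i' symbols (a function of its downloaded data) to failed
node i'; then every failed node recovers its content from its downloaded and received data.\<close>
definition coop_repairable :: "(nat \<Rightarrow> nat \<Rightarrow> 'f) set \<Rightarrow> nat set \<Rightarrow> nat set \<Rightarrow> nat \<Rightarrow> bool" where
  "coop_repairable C Fs Rs N \<longleftrightarrow>
    (\<exists>(beta::nat \<Rightarrow> nat \<Rightarrow> nat) (g::nat \<Rightarrow> nat \<Rightarrow> (nat \<Rightarrow> 'f) \<Rightarrow> 'f list)
      (gamma::nat \<Rightarrow> nat \<Rightarrow> nat) (h::nat \<Rightarrow> nat \<Rightarrow> (nat \<Rightarrow> 'f list) \<Rightarrow> 'f list)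
      (rec::nat \<Rightarrow> (nat \<Rightarrow> 'f list) \<Rightarrow> (nat \<Rightarrow> 'f list) \<Rightarrow> (nat \<Rightarrow> 'f)).
      (\<forall>j\<in>Rs. \<forall>i\<in>Fs. \<forall>x. length (g j i x) = beta j i) \<and>
      (\<forall>i\<in>Fs. \<forall>i'\<in>Fs. i \<noteq> i' \<longrightarrow> (\<forall>y. length (h i i' y) = gamma i i')) \<and>
      (\<forall>i\<in>Fs. \<forall>c\<in>C.
         rec i (downloaded g Rs i c)
               (\<lambda>i'. if i' \<in> Fs \<and> i' \<noteq> i then h i' i (downloaded g Rs i' c) else [])
         = c i) \<and>
      N = (\<Sum>i\<in>Fs. \<Sum>j\<in>Rs. beta j i) + (\<Sum>i\<in>Fs. \<Sum>i'\<in>Fs - {i}. gamma i i'))"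

definition N_co :: "(nat \<Rightarrow> nat \<Rightarrow> 'f) set \<Rightarrow> nat set \<Rightarrow> nat set \<Rightarrow> nat" where
  "N_co C Fs Rs = (LEAST N. coop_repairable C Fs Rs N)"

definition MSR_coop :: "nat \<Rightarrow> nat \<Rightarrow> nat \<Rightarrow> nat \<Rightarrow> nat \<Rightarrow> (nat \<Rightarrow> nat \<Rightarrow> 'f::field) set \<Rightarrow> bool" where
  "MSR_coop n k l h d C \<longleftrightarrow>
     MDS_array_code n k l C \<and>
     (\<forall>Fs Rs. Fs \<subseteq> {1..n} \<and> card Fs = h \<and> Rs \<subseteq> {1..n} - Fs \<and> card Rs = d \<longrightarrow>
        real (N_co C Fs Rs) = real (h * (d + h - 1) * l) / (real h + real d - real k))"

text \<open>i-th binary digit (i >= 1) of a, i.e. a_i with a = sum_i a_i 2^(i-1).\<close>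
definition bin_digit :: "nat \<Rightarrow> nat \<Rightarrow> nat" where
  "bin_digit a i = (a div 2 ^ (i - 1)) mod 2"

text \<open>The code of the paper: symbol c_{i,b,a} (b in {1,2,3}, a < 2^n) is stored at
position (b-1)*2^n + a of node i.\<close>
definition paper_code :: "nat \<Rightarrow> nat \<Rightarrow> (nat \<Rightarrow> nat \<Rightarrow> 'f::field) \<Rightarrow> (nat \<Rightarrow> nat \<Rightarrow> 'f) set" where
  "paper_code n k lam =
     {c \<in> array_space n (3 * 2 ^ n).
        \<forall>t < n - k. \<forall>b \<in> {1,2,3}. \<forall>a < 2 ^ n.
          (\<Sum>i = 1..n. lam i (bin_digit a i) ^ t * c i ((b - 1) * 2 ^ n + a)) = 0}"

end

theory Submission
  imports Defs "HOL-Computational_Algebra.Polynomial" "HOL-Library.FuncSet"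
begin

(*
  Column j of a codeword lies in the nullspace of an (n - k) x n Vandermonde matrix whose
  point at node i is lam i applied to the i-th binary digit of j.  Such a word vanishes as soon
  as it vanishes on k nodes, and its values on k nodes can be prescribed, which gives the MDS
  property and the dimension k l.

  Lower bound: codewords vanishing on some helpers and arbitrary on a set S of failed nodes are
  distinguished by what S receives from the remaining helpers and the other failed node, so
  counting over the finite field bounds that data by |S| l.  Averaging these cut-set bounds
  over the helper subsets of size 2 (for S = {i}) and 3 (for S = {i1, i2}) yields
  3 N >= 2 (k + 2) l.

  Upper bound: if two columns differ exactly in digit u, then their sum at the nodes other
  than u, together with the two symbols of node u, is a word of a Vandermonde nullspace with
  n + 1 distinct points.  Hence k + 1 helper values of such pair sums determine the two symbols
  of node u and the pair sums at every other node.  For every a, node i1 downloads from each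
  helper j the sum c_{j,b,a} + c_{j,b,a'} with b = a_i1 + 1 and a' = a with digit i1 flipped,
  and node i2 the sum c_{j,3,a} + c_{j,b,a''} with a'' = a with digit i2 flipped.  Each of them
  thereby learns the same sums at the other failed node and forwards them, after which both
  can solve for their contents.
  This uses 2^n symbols per link, i.e. 2 (k + 2) 2^n in total.
*)

section \<open>Vandermonde nullspaces\<close>

definition vandermonde_nullspace :: "'a set \<Rightarrow> ('a \<Rightarrow> 'f::field) \<Rightarrow> nat \<Rightarrow> ('a \<Rightarrow> 'f) set" where
  "vandermonde_nullspace I P r = {y. \<forall>t<r. (\<Sum>i\<in>I. P i ^ t * y i) = 0}"

lemma vandermonde_nullspace_cong:
  "(\<And>i. i \<in> I \<Longrightarrow> P i = P' i) \<Longrightarrow> vandermonde_nullspace I P r = vandermonde_nullspace I P' r"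
  by (simp add: vandermonde_nullspace_def cong: sum.cong)

lemma vandermonde_nullspace_eq_zero:
  fixes P :: "'a \<Rightarrow> 'f::field"
  assumes "finite I" and "inj_on P I" and y: "y \<in> vandermonde_nullspace I P r"
    and supp: "card {i\<in>I. y i \<noteq> 0} \<le> r" and "s \<in> I"
  shows "y s = 0"
proof (rule ccontr)
  assume ys: "y s \<noteq> 0"
  define Z where "Z = {i\<in>I. y i \<noteq> 0}"
  have "finite Z" and sZ: "s \<in> Z"
    using \<open>finite I\<close> \<open>s \<in> I\<close> ys by (auto simp: Z_def)
  \<comment> \<open>The polynomial vanishing on the other points of the support annihilates all of y but y s.\<close>
  define q where "q = (\<Prod>s'\<in>Z - {s}. [:- P s', 1:])"
  have "degree q \<le> card (Z - {s})"
    unfolding q_def by (rule order.trans[OF degree_prod_sum_le]) (use \<open>finite Z\<close> in auto)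
  also have "\<dots> < r"
    using supp sZ \<open>finite Z\<close> unfolding Z_def[symmetric] by (metis card_Diff1_less order_less_le_trans)
  finally have "degree q < r" .
  have "(\<Sum>i\<in>I. poly q (P i) * y i) = (\<Sum>t\<le>degree q. coeff q t * (\<Sum>i\<in>I. P i ^ t * y i))"
    by (simp add: poly_altdef sum_distrib_left sum_distrib_right mult.assoc sum.swap[of _ I])
  also have "\<dots> = 0"
    using \<open>degree q < r\<close> y by (intro sum.neutral) (auto simp: vandermonde_nullspace_def)
  finally have "(\<Sum>i\<in>I. poly q (P i) * y i) = 0" .
  moreover have "poly q (P i) * y i = 0" if "i \<in> I - {s}" for i
  proof (cases "i \<in> Z")
    case True
    then show ?thesis
      using that \<open>finite Z\<close> unfolding q_def poly_prod by (intro mult_eq_0_iff[THEN iffD2] disjI1 prod_zero) auto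
  qed (use that in \<open>auto simp: Z_def\<close>)
  ultimately have "poly q (P s) * y s = 0"
    using \<open>finite I\<close> \<open>s \<in> I\<close> by (simp add: sum.remove)
  moreover have "poly q (P s) \<noteq> 0"
    using \<open>finite Z\<close> inj_onD[OF \<open>inj_on P I\<close> _ \<open>s \<in> I\<close>] unfolding q_def poly_prod Z_def
    by auto
  ultimately show False
    using ys by simp
qed

lemma vandermonde_power_sums_onto:
  fixes P :: "'a \<Rightarrow> 'f::field"
  assumes "finite (UNIV :: 'f set)" and "finite R" and "inj_on P R" and "card R = r"
  obtains z where "\<forall>t<r. (\<Sum>i\<in>R. P i ^ t * z i) = b t"
proof -
  \<comment> \<open>Over a finite field the injective map z \<mapsto> power sums is onto, by counting.\<close>
  define A where "A = (R \<rightarrow>\<^sub>E (UNIV :: 'f set))"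
  define B where "B = ({..<r} \<rightarrow>\<^sub>E (UNIV :: 'f set))"
  define M where "M z = (\<lambda>t\<in>{..<r}. \<Sum>i\<in>R. P i ^ t * z i)" for z :: "'a \<Rightarrow> 'f"
  have "inj_on M A"
  proof (rule inj_onI)
    fix z z' assume "z \<in> A" "z' \<in> A" "M z = M z'"
    have "(\<Sum>i\<in>R. P i ^ t * (z i - z' i)) = 0" if "t < r" for t
      using fun_cong[OF \<open>M z = M z'\<close>, of t] that
      by (simp add: M_def right_diff_distrib sum_subtractf)
    then have "(\<lambda>i. z i - z' i) \<in> vandermonde_nullspace R P r"
      by (simp add: vandermonde_nullspace_def)
    moreover have "card {i\<in>R. z i - z' i \<noteq> 0} \<le> r"
      using \<open>finite R\<close> \<open>card R = r\<close> by (metis (no_types, lifting) card_mono mem_Collect_eq subsetI)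
    ultimately have "z i - z' i = 0" if "i \<in> R" for i
      by (rule vandermonde_nullspace_eq_zero[OF \<open>finite R\<close> \<open>inj_on P R\<close>]) (fact that)
    then show "z = z'"
      using \<open>z \<in> A\<close> \<open>z' \<in> A\<close> unfolding A_def by (intro PiE_ext) auto
  qed
  moreover have "M ` A \<subseteq> B"
    by (simp add: M_def B_def image_subset_iff)
  moreover have "card A = card B" and "finite B"
    using assms by (simp_all add: A_def B_def card_PiE finite_PiE)
  ultimately have "M ` A = B"
    by (metis card_image card_subset_eq)
  then have "restrict b {..<r} \<in> M ` A"
    by (simp add: B_def)
  then obtain z where Mz: "restrict b {..<r} = M z"
    by (rule imageE)
  have "(\<Sum>i\<in>R. P i ^ t * z i) = b t" if "t < r" for t
    using fun_cong[OF Mz, of t] that by (simp add: M_def)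
  then show ?thesis
    using that[of z] by blast
qed

lemma vandermonde_nullspace_extend:
  fixes P :: "'a \<Rightarrow> 'f::field"
  assumes "finite (UNIV :: 'f set)" and "finite I" and "K \<subseteq> I" and "inj_on P I"
    and "card (I - K) = r"
  obtains z where "z \<in> vandermonde_nullspace I P r" and "\<forall>i\<in>K. z i = y i"
proof -
  have "finite (I - K)"
    using assms(2) by simp
  then obtain z where z: "\<forall>t<r. (\<Sum>i\<in>I - K. P i ^ t * z i) = - (\<Sum>i\<in>K. P i ^ t * y i)"
    by (rule vandermonde_power_sums_onto[OF assms(1) _ inj_on_diff[OF assms(4)] assms(5)])
  define z' where "z' i = (if i \<in> K then y i else z i)" for i
  have "(\<Sum>i\<in>I. P i ^ t * z' i) = 0" if "t < r" for t
  proof -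
    have "(\<Sum>i\<in>I. P i ^ t * z' i) = (\<Sum>i\<in>K. P i ^ t * z' i) + (\<Sum>i\<in>I - K. P i ^ t * z' i)"
      using sum.subset_diff[OF \<open>K \<subseteq> I\<close> \<open>finite I\<close>] by (simp add: add.commute)
    also have "\<dots> = (\<Sum>i\<in>K. P i ^ t * y i) + (\<Sum>i\<in>I - K. P i ^ t * z i)"
      by (simp add: z'_def)
    finally show ?thesis
      using z that by simp
  qed
  then show ?thesis
    by (intro that[of z']) (auto simp: vandermonde_nullspace_def z'_def)
qed

text \<open>Adding words of two Vandermonde nullspaces whose points differ only at the index u
  gives a word of a nullspace with one extra point, a fresh index None carrying Q.\<close>

lemma vandermonde_nullspace_add_point:
  assumes "finite I" and "u \<in> I"
    and y: "y \<in> vandermonde_nullspace I P r" and z: "z \<in> vandermonde_nullspace I (P(u := Q)) r"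
  shows "case_option (z u) (\<lambda>i. if i = u then y u else y i + z i)
    \<in> vandermonde_nullspace (insert None (Some ` I)) (case_option Q P) r"
proof -
  have "(\<Sum>i\<in>I. (P(u := Q)) i ^ t * z i) = Q ^ t * z u + (\<Sum>i\<in>I - {u}. P i ^ t * z i)" for t
    using assms(1,2) by (simp add: sum.remove)
  moreover have "(\<Sum>i\<in>I. P i ^ t * (if i = u then y u else y i + z i))
      = (\<Sum>i\<in>I. P i ^ t * y i) + (\<Sum>i\<in>I - {u}. P i ^ t * z i)" for t
    using assms(1,2) by (simp add: sum.remove distrib_left sum.distrib if_distrib cong: if_cong)
  ultimately show ?thesis
    using y z \<open>finite I\<close> by (simp add: vandermonde_nullspace_def sum.reindex algebra_simps)
qed

text \<open>If moreover the sum vanishes on enough indices, that longer word has too small a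
  support to be nonzero.\<close>

lemma vandermonde_nullspace_pair:
  fixes P :: "'a \<Rightarrow> 'f::field"
  assumes "finite I" and "u \<in> I" and "inj_on P I" and "Q \<notin> P ` I"
    and y: "y \<in> vandermonde_nullspace I P r" and z: "z \<in> vandermonde_nullspace I (P(u := Q)) r"
    and "S \<subseteq> I - {u}" and "card I < card S + r" and sum_S: "\<forall>i\<in>S. y i + z i = 0"
  shows "y u = 0" and "z u = 0" and "\<forall>i\<in>I - {u}. y i + z i = 0"
proof -
  define J where "J = insert None (Some ` I)"
  define w where "w = case_option (z u) (\<lambda>i. if i = u then y u else y i + z i)"
  have "finite J" and "finite S"
    using \<open>finite I\<close> finite_subset[OF \<open>S \<subseteq> I - {u}\<close>] by (simp_all add: J_def)
  have "inj_on (case_option Q P) J"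
    using \<open>inj_on P I\<close> \<open>Q \<notin> P ` I\<close> by (auto simp: inj_on_def J_def)
  moreover have "w \<in> vandermonde_nullspace J (case_option Q P) r"
    unfolding w_def J_def by (rule vandermonde_nullspace_add_point[OF \<open>finite I\<close> \<open>u \<in> I\<close> y z])
  moreover have "card {x\<in>J. w x \<noteq> 0} \<le> r"
  proof -
    have "w (Some i) = 0" if "i \<in> S" for i
      using that sum_S \<open>S \<subseteq> I - {u}\<close> by (auto simp: w_def)
    then have "card {x\<in>J. w x \<noteq> 0} \<le> card (J - Some ` S)"
      using \<open>finite J\<close> by (intro card_mono) auto
    also have "\<dots> = card I + 1 - card S"
      using \<open>finite I\<close> \<open>finite S\<close> \<open>S \<subseteq> I - {u}\<close>
      by (subst card_Diff_subset) (auto simp: J_def card_image)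
    finally show ?thesis
      using \<open>card I < card S + r\<close> by linarith
  qed
  ultimately have w0: "w x = 0" if "x \<in> J" for x
    using vandermonde_nullspace_eq_zero[OF \<open>finite J\<close>] that by blast
  show "y u = 0" "z u = 0"
    using w0[of None] w0[of "Some u"] \<open>u \<in> I\<close> by (simp_all add: J_def w_def)
  show "\<forall>i\<in>I - {u}. y i + z i = 0"
  proof
    fix i assume "i \<in> I - {u}"
    then show "y i + z i = 0"
      using w0[of "Some i"] by (simp add: J_def w_def)
  qed
qed

section \<open>Array codes\<close>

interpretation fscale: vector_space "fscale :: 'a::field \<Rightarrow> (nat \<Rightarrow> nat \<Rightarrow> 'a) \<Rightarrow> _"
  by unfold_locales (auto simp: fscale_def fun_eq_iff algebra_simps)

lemma sum_apply: "sum F A x = (\<Sum>a\<in>A. F a x)"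
  by (induction A rule: infinite_finite_induct) auto

definition free_on :: "nat set \<Rightarrow> nat \<Rightarrow> (nat \<Rightarrow> nat \<Rightarrow> 'f) set \<Rightarrow> bool" where
  "free_on K l C \<longleftrightarrow> (\<forall>v. \<exists>c\<in>C. \<forall>i\<in>K. \<forall>j<l. c i j = v i j)"

lemma array_space_beyond:
  "c \<in> array_space n l \<Longrightarrow> l \<le> j \<Longrightarrow> c i j = 0"
  by (simp add: array_space_def)

lemma fscale_independent_units:
  fixes E :: "nat \<times> nat \<Rightarrow> nat \<Rightarrow> nat \<Rightarrow> 'f::field"
  assumes "finite X" and unit: "\<And>x y. x \<in> X \<Longrightarrow> y \<in> X \<Longrightarrow> E x (fst y) (snd y) = of_bool (x = y)"
  shows "inj_on E X" and "fscale.independent (E ` X)"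
proof -
  show inj: "inj_on E X"
    using unit by (metis (mono_tags) inj_onI of_bool_eq_iff)
  show "fscale.independent (E ` X)"
  proof (rule fscale.independent_if_scalars_zero)
    fix f b assume sum0: "(\<Sum>b\<in>E ` X. fscale (f b) b) = 0" and "b \<in> E ` X"
    then obtain x where "x \<in> X" and "b = E x"
      by blast
    have "0 = (\<Sum>b'\<in>E ` X. f b' * b' (fst x) (snd x))"
      using fun_cong[OF fun_cong[OF sum0, of "fst x"], of "snd x"] by (simp add: sum_apply fscale_def)
    also have "\<dots> = (\<Sum>b'\<in>E ` X. if b' = b then f b' else 0)"
    proof (rule sum.cong[OF refl])
      fix b' assume "b' \<in> E ` X"
      then obtain y where "y \<in> X" and "b' = E y"
        by blast
      then show "f b' * b' (fst x) (snd x) = (if b' = b then f b' else 0)"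
        using unit[OF \<open>y \<in> X\<close> \<open>x \<in> X\<close>] inj_on_eq_iff[OF inj \<open>y \<in> X\<close> \<open>x \<in> X\<close>] \<open>b = E x\<close>
        by auto
    qed
    also have "\<dots> = f b"
      using \<open>finite X\<close> \<open>b \<in> E ` X\<close> by simp
    finally show "f b = 0" ..
  qed (use \<open>finite X\<close> in simp)
qed

text \<open>The codewords that are a unit symbol on K \<times> {..<l} form a basis.\<close>

lemma dim_array_code:
  fixes C :: "(nat \<Rightarrow> nat \<Rightarrow> 'f::field) set"
  assumes "fscale.subspace C" and "finite K" and free: "free_on K l C"
    and determined: "\<And>c c'. c \<in> C \<Longrightarrow> c' \<in> C \<Longrightarrow> \<forall>i\<in>K. \<forall>j<l. c i j = c' i j \<Longrightarrow> c = c'"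
  shows "fscale.dim C = card K * l"
proof -
  define X where "X = K \<times> {..<l}"
  have "\<exists>c. c \<in> C \<and> (\<forall>i\<in>K. \<forall>j<l. c i j = of_bool ((i, j) = x))" for x
    using free[unfolded free_on_def, THEN spec, of "\<lambda>i j. of_bool ((i, j) = x)"] by auto
  then obtain E where E_C: "E x \<in> C" and E_K: "\<forall>i\<in>K. \<forall>j<l. E x i j = of_bool ((i, j) = x)" for x
    by metis
  have "finite X"
    using \<open>finite K\<close> by (simp add: X_def)
  have E_X: "E x i j = of_bool ((i, j) = x)" if "(i, j) \<in> X" for x i j
    using E_K that by (auto simp: X_def)
  have units: "E x (fst y) (snd y) = of_bool (x = y)" if "y \<in> X" for x y
    using E_X[of "fst y" "snd y" x] that by (simp add: eq_commute)
  have "C \<subseteq> fscale.span (E ` X)"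
  proof
    fix c assume "c \<in> C"
    define s where "s = (\<Sum>x\<in>X. fscale (c (fst x) (snd x)) (E x))"
    have "s \<in> C"
      unfolding s_def using \<open>fscale.subspace C\<close> E_C
      by (intro fscale.subspace_sum fscale.subspace_scale) auto
    moreover have "s i j = c i j" if "i \<in> K" and "j < l" for i j
    proof -
      have "s i j = (\<Sum>x\<in>X. if x = (i, j) then c i j else 0)"
        unfolding s_def sum_apply fscale_def using that
        by (intro sum.cong) (auto simp: E_X X_def)
      then show ?thesis
        using that \<open>finite X\<close> by (simp add: X_def)
    qed
    ultimately have "c = s"
      using determined[OF \<open>c \<in> C\<close>] by simp
    moreover have "s \<in> fscale.span (E ` X)"
      unfolding s_def by (intro fscale.span_sum fscale.span_scale fscale.span_base) auto
    ultimately show "c \<in> fscale.span (E ` X)"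
      by simp
  qed
  moreover have "E ` X \<subseteq> C" and "card (E ` X) = card K * l"
    using E_C card_image[OF fscale_independent_units(1)[OF \<open>finite X\<close> units]]
    by (auto simp: X_def card_cartesian_product)
  ultimately show ?thesis
    using fscale.dim_unique fscale_independent_units(2)[OF \<open>finite X\<close> units] by blast
qed

lemma free_on_prescribed_codewords:
  assumes free: "free_on (Z \<union> S) l C" and "C \<subseteq> array_space n l" and "Z \<inter> S = {}"
  obtains cw where "\<And>v. cw v \<in> C" and "\<And>v i p. i \<in> S \<Longrightarrow> p < l \<Longrightarrow> cw v i p = v (i, p)"
    and "\<And>v j. j \<in> Z \<Longrightarrow> cw v j = (\<lambda>_. 0)"
proof -
  have "\<exists>c. c \<in> C \<and> (\<forall>i\<in>Z \<union> S. \<forall>p<l. c i p = (if i \<in> S then v (i, p) else 0))" for v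
    using free[unfolded free_on_def, THEN spec, of "\<lambda>i p. if i \<in> S then v (i, p) else 0"] by auto
  then obtain cw where cw_C: "cw v \<in> C"
    and cw_K: "\<forall>i\<in>Z \<union> S. \<forall>p<l. cw v i p = (if i \<in> S then v (i, p) else 0)" for v
    by metis
  have "cw v j = (\<lambda>_. 0)" if "j \<in> Z" for v j
  proof
    fix p
    show "cw v j p = 0"
    proof (cases "p < l")
      case True
      then show ?thesis
        using cw_K[of v] that \<open>Z \<inter> S = {}\<close> by auto
    next
      case False
      then show ?thesis
        using array_space_beyond[OF subsetD[OF \<open>C \<subseteq> array_space n l\<close> cw_C]] by simp
    qed
  qed
  then show ?thesis
    using that[of cw] cw_C cw_K by auto
qed

section \<open>Cooperative repair\<close>

definition received ::
  "(nat \<Rightarrow> nat \<Rightarrow> (nat \<Rightarrow> 'f) \<Rightarrow> 'f list) \<Rightarrow> (nat \<Rightarrow> nat \<Rightarrow> (nat \<Rightarrow> 'f list) \<Rightarrow> 'f list) \<Rightarrow>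
    nat set \<Rightarrow> nat set \<Rightarrow> nat \<Rightarrow> (nat \<Rightarrow> nat \<Rightarrow> 'f) \<Rightarrow> (nat \<Rightarrow> 'f list)" where
  "received g h Fs Rs i c = (\<lambda>i'. if i' \<in> Fs \<and> i' \<noteq> i then h i' i (downloaded g Rs i' c) else [])"

definition repair_scheme ::
  "(nat \<Rightarrow> nat \<Rightarrow> 'f) set \<Rightarrow> nat set \<Rightarrow> nat set \<Rightarrow> (nat \<Rightarrow> nat \<Rightarrow> nat) \<Rightarrow>
    (nat \<Rightarrow> nat \<Rightarrow> (nat \<Rightarrow> 'f) \<Rightarrow> 'f list) \<Rightarrow> (nat \<Rightarrow> nat \<Rightarrow> nat) \<Rightarrow>
    (nat \<Rightarrow> nat \<Rightarrow> (nat \<Rightarrow> 'f list) \<Rightarrow> 'f list) \<Rightarrow>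
    (nat \<Rightarrow> (nat \<Rightarrow> 'f list) \<Rightarrow> (nat \<Rightarrow> 'f list) \<Rightarrow> (nat \<Rightarrow> 'f)) \<Rightarrow> bool" where
  "repair_scheme C Fs Rs beta g gamma h rec \<longleftrightarrow>
     (\<forall>j\<in>Rs. \<forall>i\<in>Fs. \<forall>x. length (g j i x) = beta j i) \<and>
     (\<forall>i\<in>Fs. \<forall>i'\<in>Fs. i \<noteq> i' \<longrightarrow> (\<forall>y. length (h i i' y) = gamma i i')) \<and>
     (\<forall>i\<in>Fs. \<forall>c\<in>C. rec i (downloaded g Rs i c) (received g h Fs Rs i c) = c i)"

lemma repair_schemeD:
  assumes "repair_scheme C Fs Rs beta g gamma h rec"
  shows "j \<in> Rs \<Longrightarrow> i \<in> Fs \<Longrightarrow> length (g j i x) = beta j i"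
    and "i \<in> Fs \<Longrightarrow> i' \<in> Fs \<Longrightarrow> i \<noteq> i' \<Longrightarrow> length (h i i' y) = gamma i i'"
    and "i \<in> Fs \<Longrightarrow> c \<in> C \<Longrightarrow> rec i (downloaded g Rs i c) (received g h Fs Rs i c) = c i"
  using assms unfolding repair_scheme_def by auto

definition repair_bandwidth ::
  "nat set \<Rightarrow> nat set \<Rightarrow> (nat \<Rightarrow> nat \<Rightarrow> nat) \<Rightarrow> (nat \<Rightarrow> nat \<Rightarrow> nat) \<Rightarrow> nat" where
  "repair_bandwidth Fs Rs beta gamma =
     (\<Sum>i\<in>Fs. \<Sum>j\<in>Rs. beta j i) + (\<Sum>i\<in>Fs. \<Sum>i'\<in>Fs - {i}. gamma i i')"

lemma coop_repairable_iff:
  "coop_repairable C Fs Rs N \<longleftrightarrow>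
     (\<exists>beta g gamma h rec. repair_scheme C Fs Rs beta g gamma h rec \<and>
        N = repair_bandwidth Fs Rs beta gamma)"
  unfolding coop_repairable_def repair_scheme_def received_def repair_bandwidth_def by blast

lemma card_PiE_lists:
  assumes "finite (UNIV :: 'a set)" and "finite A"
  shows "card (PiE A (\<lambda>x. {xs :: 'a list. length xs = f x})) = card (UNIV :: 'a set) ^ (\<Sum>x\<in>A. f x)"
    and "finite (PiE A (\<lambda>x. {xs :: 'a list. length xs = f x}))"
  using assms card_lists_length_eq[of "UNIV :: 'a set"] finite_lists_length_eq[of "UNIV :: 'a set"]
  by (simp_all add: card_PiE finite_PiE power_sum)

lemma repair_scheme_cut_determines:
  assumes scheme: "repair_scheme C Fs Rs beta g gamma h rec"
    and "S \<subseteq> Fs" and "c \<in> C" and "c' \<in> C"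
    and outside: "\<And>j. j \<in> Rs - T \<Longrightarrow> c j = c' j"
    and from_T: "\<And>i j. i \<in> S \<Longrightarrow> j \<in> T \<Longrightarrow> g j i (c j) = g j i (c' j)"
    and from_Fs: "\<And>i i'. i \<in> S \<Longrightarrow> i' \<in> Fs - S \<Longrightarrow>
      h i' i (downloaded g Rs i' c) = h i' i (downloaded g Rs i' c')"
    and "i \<in> S"
  shows "c i = c' i"
proof -
  have download: "downloaded g Rs i' c = downloaded g Rs i' c'" if "i' \<in> S" for i'
  proof
    fix j
    show "downloaded g Rs i' c j = downloaded g Rs i' c' j"
      using from_T[OF that, of j] outside[of j] by (cases "j \<in> T") (auto simp: downloaded_def)
  qed
  have "received g h Fs Rs i c = received g h Fs Rs i c'"
  proof
    fix i'
    show "received g h Fs Rs i c i' = received g h Fs Rs i c' i'"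
      using from_Fs[OF \<open>i \<in> S\<close>, of i'] download[of i'] by (cases "i' \<in> S") (auto simp: received_def)
  qed
  then show ?thesis
    using repair_schemeD(3)[OF scheme _ \<open>c \<in> C\<close>] repair_schemeD(3)[OF scheme _ \<open>c' \<in> C\<close>]
      download[OF \<open>i \<in> S\<close>] \<open>i \<in> S\<close> \<open>S \<subseteq> Fs\<close> by (metis subsetD)
qed

text \<open>The cut-set bound: the contents of S can be chosen freely among the codewords vanishing
  on the helpers outside T, and they are determined by the data crossing into S.\<close>

lemma cut_set_bound:
  fixes C :: "(nat \<Rightarrow> nat \<Rightarrow> 'f::zero_neq_one) set"
  assumes "finite (UNIV :: 'f set)"
    and scheme: "repair_scheme C Fs Rs beta g gamma h rec"
    and "C \<subseteq> array_space n l" and free: "free_on ((Rs - T) \<union> S) l C"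
    and "S \<subseteq> Fs" and "T \<subseteq> Rs" and "finite Fs" and "finite T" and "Fs \<inter> Rs = {}"
  shows "card S * l \<le> (\<Sum>i\<in>S. \<Sum>j\<in>T. beta j i) + (\<Sum>i\<in>S. \<Sum>i'\<in>Fs - S. gamma i' i)"
proof -
  have "finite S"
    using \<open>S \<subseteq> Fs\<close> \<open>finite Fs\<close> by (rule finite_subset)
  obtain cw where cw_C: "\<And>v. cw v \<in> C" and cw_S: "\<And>v i p. i \<in> S \<Longrightarrow> p < l \<Longrightarrow> cw v i p = v (i, p)"
    and cw_zero: "\<And>v j. j \<in> Rs - T \<Longrightarrow> cw v j = (\<lambda>_. 0)"
    using free_on_prescribed_codewords[OF free \<open>C \<subseteq> array_space n l\<close>] \<open>S \<subseteq> Fs\<close> \<open>Fs \<inter> Rs = {}\<close>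
    by blast
  define V where "V = (S \<times> {..<l} \<rightarrow>\<^sub>E (UNIV :: 'f set))"
  define W where "W = PiE (S \<times> T) (\<lambda>(i, j). {xs :: 'f list. length xs = beta j i}) \<times>
    PiE (S \<times> (Fs - S)) (\<lambda>(i, i'). {xs :: 'f list. length xs = gamma i' i})"
  define data where "data v =
    ((\<lambda>(i, j)\<in>S \<times> T. g j i (cw v j)),
     (\<lambda>(i, i')\<in>S \<times> (Fs - S). h i' i (downloaded g Rs i' (cw v))))" for v
  have len_g: "length (g j i x) = beta j i" if "i \<in> S" and "j \<in> T" for i j x
    using repair_schemeD(1)[OF scheme] that \<open>S \<subseteq> Fs\<close> \<open>T \<subseteq> Rs\<close> by blast
  have len_h: "length (h i' i y) = gamma i' i" if "i \<in> S" and "i' \<in> Fs - S" for i i' y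
    using repair_schemeD(2)[OF scheme] that \<open>S \<subseteq> Fs\<close> by blast
  have data_V: "data ` V \<subseteq> W"
    by (auto simp: data_def W_def len_g len_h split: if_splits)
  have inj_data: "inj_on data V"
  proof (rule inj_onI)
    fix v w assume "v \<in> V" and "w \<in> V" and "data v = data w"
    have same_node: "cw v i = cw w i" if "i \<in> S" for i
    proof (rule repair_scheme_cut_determines[OF scheme \<open>S \<subseteq> Fs\<close> cw_C cw_C _ _ _ that])
      show "cw v j = cw w j" if "j \<in> Rs - T" for j
        using cw_zero[OF that] by simp
      show "g j i (cw v j) = g j i (cw w j)" if "i \<in> S" and "j \<in> T" for i j
        using fun_cong[OF arg_cong[OF \<open>data v = data w\<close>, of fst], of "(i, j)"] that
        by (simp add: data_def)
      show "h i' i (downloaded g Rs i' (cw v)) = h i' i (downloaded g Rs i' (cw w))"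
        if "i \<in> S" and "i' \<in> Fs - S" for i i'
        using fun_cong[OF arg_cong[OF \<open>data v = data w\<close>, of snd], of "(i, i')"] that
        by (simp add: data_def)
    qed
    show "v = w"
    proof (rule PiE_ext[OF \<open>v \<in> V\<close>[unfolded V_def] \<open>w \<in> V\<close>[unfolded V_def]])
      fix x assume "x \<in> S \<times> {..<l}"
      then obtain i p where "x = (i, p)" and "i \<in> S" and "p < l"
        by auto
      then show "v x = w x"
        using cw_S[of i p v] cw_S[of i p w] same_node[OF \<open>i \<in> S\<close>] by simp
    qed
  qed
  have "finite W" and card_W: "card W = card (UNIV :: 'f set) ^
      ((\<Sum>i\<in>S. \<Sum>j\<in>T. beta j i) + (\<Sum>i\<in>S. \<Sum>i'\<in>Fs - S. gamma i' i))"
    using card_PiE_lists[OF \<open>finite UNIV\<close>, of "S \<times> T"] card_PiE_lists[OF \<open>finite UNIV\<close>, of "S \<times> (Fs - S)"]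
      \<open>finite S\<close> \<open>finite T\<close> \<open>finite Fs\<close>
    by (simp_all add: W_def card_cartesian_product power_add sum.cartesian_product case_prod_beta')
  moreover have "card V = card (UNIV :: 'f set) ^ (card S * l)"
    using \<open>finite UNIV\<close> \<open>finite S\<close> by (simp add: V_def card_PiE card_cartesian_product)
  moreover have "card V \<le> card W"
    using card_inj_on_le[OF inj_data data_V \<open>finite W\<close>] .
  moreover have "1 < card (UNIV :: 'f set)"
    using \<open>finite UNIV\<close> card_mono[of UNIV "{0 :: 'f, 1}"] by simp
  ultimately show ?thesis
    using card_W power_le_imp_le_exp by simp
qed

lemma exists_subset_sum_le_average:
  fixes f :: "'a \<Rightarrow> nat"
  assumes "finite R" and "q \<le> card R"
  shows "\<exists>T\<subseteq>R. card T = q \<and> card R * sum f T \<le> q * sum f R"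
  using assms
proof (induction "card R - q" arbitrary: R)
  case 0
  then show ?case
    by (metis diff_is_0_eq le_antisym order_refl)
next
  case (Suc d)
  then have "R \<noteq> {}"
    by auto
  \<comment> \<open>Drop an element of maximal weight and average over the rest.\<close>
  obtain x where "x \<in> R" and x_max: "\<forall>y\<in>R. f y \<le> f x"
    using Max_in[of "f ` R"] Max_ge[of "f ` R"] \<open>finite R\<close> \<open>R \<noteq> {}\<close> by fastforce
  have "d = card (R - {x}) - q" and "q \<le> card (R - {x})"
    using Suc.hyps(2) Suc.prems \<open>x \<in> R\<close> by auto
  then obtain T where "T \<subseteq> R - {x}" and "card T = q"
    and avg: "card (R - {x}) * sum f T \<le> q * sum f (R - {x})"
    using Suc.hyps(1) \<open>finite R\<close> by blast
  have "sum f T \<le> q * f x"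
    using sum_bounded_above[of T f "f x"] x_max \<open>T \<subseteq> R - {x}\<close> \<open>card T = q\<close> by auto
  moreover have "card R = card (R - {x}) + 1"
    using card_Suc_Diff1[OF \<open>finite R\<close> \<open>x \<in> R\<close>] by simp
  moreover have "sum f R = sum f (R - {x}) + f x"
    using \<open>finite R\<close> \<open>x \<in> R\<close> by (simp add: sum.remove)
  ultimately have "card R * sum f T \<le> q * sum f R"
    using avg by (simp add: algebra_simps)
  then show ?case
    using \<open>T \<subseteq> R - {x}\<close> \<open>card T = q\<close> by blast
qed

lemma averaged_cut_set_bound:
  fixes C :: "(nat \<Rightarrow> nat \<Rightarrow> 'f::zero_neq_one) set"
  assumes "finite (UNIV :: 'f set)" and scheme: "repair_scheme C Fs Rs beta g gamma h rec"
    and "C \<subseteq> array_space n l" and free: "\<forall>K. K \<subseteq> {1..n} \<and> card K = k \<longrightarrow> free_on K l C"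
    and "Fs \<subseteq> {1..n}" and "Rs \<subseteq> {1..n} - Fs" and "S \<subseteq> Fs"
    and "q \<le> card Rs" and "card Rs + card S = k + q"
  shows "card Rs * (card S * l) \<le>
    q * (\<Sum>i\<in>S. \<Sum>j\<in>Rs. beta j i) + card Rs * (\<Sum>i\<in>S. \<Sum>i'\<in>Fs - S. gamma i' i)"
proof -
  define f where "f j = (\<Sum>i\<in>S. beta j i)" for j
  have "finite Fs" and "finite Rs" and "Fs \<inter> Rs = {}"
    using finite_subset[OF \<open>Fs \<subseteq> {1..n}\<close>] finite_subset[OF \<open>Rs \<subseteq> {1..n} - Fs\<close>]
      \<open>Rs \<subseteq> {1..n} - Fs\<close> by auto
  obtain T where "T \<subseteq> Rs" and "card T = q" and avg: "card Rs * sum f T \<le> q * sum f Rs"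
    using exists_subset_sum_le_average[OF \<open>finite Rs\<close> \<open>q \<le> card Rs\<close>] by blast
  have "finite T"
    using \<open>T \<subseteq> Rs\<close> \<open>finite Rs\<close> by (rule finite_subset)
  have "card ((Rs - T) \<union> S) = k"
    using \<open>T \<subseteq> Rs\<close> \<open>card T = q\<close> \<open>card Rs + card S = k + q\<close> \<open>S \<subseteq> Fs\<close> \<open>Fs \<inter> Rs = {}\<close>
      \<open>finite Rs\<close> \<open>finite T\<close> finite_subset[OF \<open>S \<subseteq> Fs\<close> \<open>finite Fs\<close>]
      card_mono[OF \<open>finite Rs\<close> \<open>T \<subseteq> Rs\<close>]
    by (subst card_Un_disjoint) (auto simp: card_Diff_subset)
  moreover have "(Rs - T) \<union> S \<subseteq> {1..n}"
    using \<open>S \<subseteq> Fs\<close> \<open>Fs \<subseteq> {1..n}\<close> \<open>Rs \<subseteq> {1..n} - Fs\<close> by blast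
  ultimately have "free_on ((Rs - T) \<union> S) l C"
    using free by blast
  from cut_set_bound[OF \<open>finite UNIV\<close> scheme \<open>C \<subseteq> array_space n l\<close> this \<open>S \<subseteq> Fs\<close> \<open>T \<subseteq> Rs\<close>
      \<open>finite Fs\<close> \<open>finite T\<close> \<open>Fs \<inter> Rs = {}\<close>]
  have "card S * l \<le> sum f T + (\<Sum>i\<in>S. \<Sum>i'\<in>Fs - S. gamma i' i)"
    unfolding f_def by (simp add: sum.swap[of _ S])
  then have "card Rs * (card S * l) \<le> card Rs * sum f T + card Rs * (\<Sum>i\<in>S. \<Sum>i'\<in>Fs - S. gamma i' i)"
    by (metis distrib_left mult_le_mono2)
  with avg show ?thesis
    unfolding f_def by (simp add: sum.swap[of _ S])
qed

lemma coop_bandwidth_two_failures_lower_bound: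
  fixes C :: "(nat \<Rightarrow> nat \<Rightarrow> 'f::zero_neq_one) set"
  assumes "finite (UNIV :: 'f set)" and "C \<subseteq> array_space n l"
    and free: "\<forall>K. K \<subseteq> {1..n} \<and> card K = k \<longrightarrow> free_on K l C"
    and "1 \<le> k" and "Fs \<subseteq> {1..n}" and "card Fs = 2" and "Rs \<subseteq> {1..n} - Fs" and "card Rs = k + 1"
    and "coop_repairable C Fs Rs N"
  shows "2 * (k + 2) * l \<le> 3 * N"
proof -
  obtain beta g gamma h rec where scheme: "repair_scheme C Fs Rs beta g gamma h rec"
    and N: "N = repair_bandwidth Fs Rs beta gamma"
    using \<open>coop_repairable C Fs Rs N\<close> unfolding coop_repairable_iff by (elim exE conjE) (rule that)
  obtain i1 i2 where Fs: "Fs = {i1, i2}" and "i1 \<noteq> i2"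
    using \<open>card Fs = 2\<close> unfolding card_2_iff by blast
  note averaged = averaged_cut_set_bound[OF \<open>finite UNIV\<close> scheme \<open>C \<subseteq> array_space n l\<close> free
      \<open>Fs \<subseteq> {1..n}\<close> \<open>Rs \<subseteq> {1..n} - Fs\<close>]
  define B where "B i = (\<Sum>j\<in>Rs. beta j i)" for i
  have one: "(k + 1) * l \<le> 2 * B i1 + (k + 1) * gamma i2 i1"
    using averaged[of "{i1}" 2] \<open>card Rs = k + 1\<close> \<open>1 \<le> k\<close> Fs \<open>i1 \<noteq> i2\<close> by (simp add: B_def)
  have two: "(k + 1) * l \<le> 2 * B i2 + (k + 1) * gamma i1 i2"
    using averaged[of "{i2}" 2] \<open>card Rs = k + 1\<close> \<open>1 \<le> k\<close> Fs \<open>i1 \<noteq> i2\<close>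
    by (simp add: B_def insert_Diff_if)
  have both: "(k + 1) * (2 * l) \<le> 3 * (B i1 + B i2)" if "2 \<le> k"
    using averaged[of Fs 3] \<open>card Rs = k + 1\<close> that Fs \<open>i1 \<noteq> i2\<close> by (simp add: B_def mult_2)
  have N_eq: "N = B i1 + B i2 + gamma i1 i2 + gamma i2 i1"
    using N Fs \<open>i1 \<noteq> i2\<close> by (simp add: repair_bandwidth_def B_def insert_Diff_if)
  show ?thesis
  proof (cases "k = 1")
    case True
    then show ?thesis
      using one two N_eq by simp
  next
    case False
    then have "2 \<le> k"
      using \<open>1 \<le> k\<close> by simp
    obtain j where k: "k = j + 1"
      using \<open>1 \<le> k\<close> by (metis add.commute le_Suc_ex)
    \<comment> \<open>Three times the sum of the single-node bounds plus k - 1 times the two-node bound.\<close>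
    have "j * ((k + 1) * (2 * l)) \<le> j * (3 * (B i1 + B i2))"
      using both[OF \<open>2 \<le> k\<close>] by simp
    then have "(k + 1) * (2 * (k + 2) * l) \<le> (k + 1) * (3 * N)"
      using one two N_eq unfolding k by (simp add: algebra_simps)
    then show ?thesis
      by (rule mult_left_le_imp_le) simp
  qed
qed

text \<open>The decoders just pick any codeword consistent with the data they hold.\<close>

lemma coop_repairable_if_determined:
  fixes msg :: "nat \<Rightarrow> nat \<Rightarrow> (nat \<Rightarrow> nat \<Rightarrow> 'f) \<Rightarrow> 'f list"
  assumes len_g: "\<And>j i x. j \<in> Rs \<Longrightarrow> i \<in> Fs \<Longrightarrow> length (g j i x) = beta j i"
    and len_msg: "\<And>i i' c. i \<in> Fs \<Longrightarrow> i' \<in> Fs \<Longrightarrow> i \<noteq> i' \<Longrightarrow> length (msg i i' c) = gamma i i'"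
    and msg_det: "\<And>i i' c c'. i \<in> Fs \<Longrightarrow> i' \<in> Fs \<Longrightarrow> i \<noteq> i' \<Longrightarrow> c \<in> C \<Longrightarrow> c' \<in> C \<Longrightarrow>
      downloaded g Rs i c = downloaded g Rs i c' \<Longrightarrow> msg i i' c = msg i i' c'"
    and node_det: "\<And>i c c'. i \<in> Fs \<Longrightarrow> c \<in> C \<Longrightarrow> c' \<in> C \<Longrightarrow>
      downloaded g Rs i c = downloaded g Rs i c' \<Longrightarrow>
      (\<And>i'. i' \<in> Fs - {i} \<Longrightarrow> msg i' i c = msg i' i c') \<Longrightarrow> c i = c' i"
  shows "coop_repairable C Fs Rs (repair_bandwidth Fs Rs beta gamma)"
proof -
  define h where "h i i' Y = msg i i' (SOME c. c \<in> C \<and> downloaded g Rs i c = Y)" for i i' Y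
  have h_eq: "h i i' (downloaded g Rs i c) = msg i i' c"
    if "i \<in> Fs" "i' \<in> Fs" "i \<noteq> i'" "c \<in> C" for i i' c
  proof -
    let ?c = "SOME c'. c' \<in> C \<and> downloaded g Rs i c' = downloaded g Rs i c"
    have "?c \<in> C \<and> downloaded g Rs i ?c = downloaded g Rs i c"
      by (rule someI[of _ c]) (simp add: \<open>c \<in> C\<close>)
    then show ?thesis
      unfolding h_def using msg_det[OF that(1-3) _ that(4)] by blast
  qed
  define rec where "rec i D X =
    (SOME c. c \<in> C \<and> downloaded g Rs i c = D \<and> received g h Fs Rs i c = X) i" for i D X
  have "rec i (downloaded g Rs i c) (received g h Fs Rs i c) = c i" if "i \<in> Fs" "c \<in> C" for i c
  proof -
    let ?c = "SOME c'. c' \<in> C \<and> downloaded g Rs i c' = downloaded g Rs i c \<and>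
      received g h Fs Rs i c' = received g h Fs Rs i c"
    have c: "?c \<in> C" and "downloaded g Rs i ?c = downloaded g Rs i c"
      and rcv: "received g h Fs Rs i ?c = received g h Fs Rs i c"
      using someI[of "\<lambda>c'. c' \<in> C \<and> downloaded g Rs i c' = downloaded g Rs i c \<and>
        received g h Fs Rs i c' = received g h Fs Rs i c" c] \<open>c \<in> C\<close> by simp_all
    moreover have "msg i' i ?c = msg i' i c" if "i' \<in> Fs - {i}" for i'
      using fun_cong[OF rcv, of i'] that h_eq[OF _ \<open>i \<in> Fs\<close> _ c] h_eq[OF _ \<open>i \<in> Fs\<close> _ \<open>c \<in> C\<close>]
      by (simp add: received_def)
    ultimately show ?thesis
      unfolding rec_def using node_det[OF \<open>i \<in> Fs\<close> c \<open>c \<in> C\<close>] by blast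
  qed
  moreover have "length (h i i' Y) = gamma i i'" if "i \<in> Fs" "i' \<in> Fs" "i \<noteq> i'" for i i' Y
    using len_msg that by (simp add: h_def)
  ultimately show ?thesis
    unfolding coop_repairable_iff repair_scheme_def using len_g by blast
qed

section \<open>Binary digits and layers\<close>

definition flip_digit :: "nat \<Rightarrow> nat \<Rightarrow> nat" where
  "flip_digit i a = flip_bit (i - 1) a"

lemma bin_digit_bit: "bin_digit a i = of_bool (bit a (i - 1))"
  by (simp add: bin_digit_def bit_iff_odd odd_iff_mod_2_eq_one)

lemma bin_digit_le_1: "bin_digit a i \<le> 1"
  by (simp add: bin_digit_def)

lemma bin_digit_flip_digit:
  "1 \<le> i \<Longrightarrow> 1 \<le> i' \<Longrightarrow>
    bin_digit (flip_digit i a) i' = (if i' = i then 1 - bin_digit a i else bin_digit a i')"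
  by (auto simp: bin_digit_bit flip_digit_def bit_flip_bit_iff)

lemma flip_digit_flip_digit [simp]: "flip_digit i (flip_digit i a) = a"
  by (rule bit_eqI) (auto simp: flip_digit_def bit_flip_bit_iff)

lemma flip_digit_less: "a < 2 ^ n \<Longrightarrow> i \<in> {1..n} \<Longrightarrow> flip_digit i a < 2 ^ n"
proof -
  assume "a < 2 ^ n" and "i \<in> {1..n}"
  then have "take_bit n (flip_digit i a) = flip_digit i a"
    by (auto simp: flip_digit_def take_bit_flip_bit_eq take_bit_nat_eq_self)
  then show ?thesis
    by (simp add: take_bit_nat_eq_self_iff)
qed

lemma bin_digit_layer:
  assumes "a < 2 ^ n" and "i \<in> {1..n}"
  shows "bin_digit (v * 2 ^ n + a) i = bin_digit a i"
proof -
  have "bit (v * 2 ^ n + a) (i - 1) \<longleftrightarrow> bit (take_bit n (v * 2 ^ n + a)) (i - 1)"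
    using assms by (auto simp: bit_take_bit_iff)
  also have "take_bit n (v * 2 ^ n + a) = a"
    using assms by (simp add: take_bit_eq_mod)
  finally show ?thesis
    by (simp add: bin_digit_bit)
qed

lemma layer_decomposition:
  fixes j n :: nat
  assumes "j < 3 * 2 ^ n"
  obtains v a where "v < 3" and "a < 2 ^ n" and "j = v * 2 ^ n + a"
proof
  show "j div 2 ^ n < 3" and "j mod 2 ^ n < 2 ^ n"
    using assms by (simp_all add: less_mult_imp_div_less)
  show "j = j div 2 ^ n * 2 ^ n + j mod 2 ^ n"
    by (rule div_mult_mod_eq[symmetric])
qed

lemma layer_less:
  fixes v a n :: nat
  assumes "v < 3" and "a < 2 ^ n"
  shows "v * 2 ^ n + a < 3 * 2 ^ n"
proof -
  have "v * 2 ^ n + a < (v + 1) * 2 ^ n"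
    using assms(2) by simp
  also have "\<dots> \<le> 3 * 2 ^ n"
    using assms(1) by (intro mult_right_mono) auto
  finally show ?thesis .
qed

lemma bin_digit_flip_layer:
  assumes "a < 2 ^ n" and "u \<in> {1..n}" and "i \<in> {1..n}"
  shows "bin_digit (w * 2 ^ n + flip_digit u a) i =
    (if i = u then 1 - bin_digit (v * 2 ^ n + a) i else bin_digit (v * 2 ^ n + a) i)"
  using assms by (simp add: bin_digit_layer flip_digit_less bin_digit_flip_digit)

lemma array_node_eq_zero:
  assumes "c \<in> array_space n' (3 * 2 ^ n)" and "\<And>v a. v < 3 \<Longrightarrow> a < 2 ^ n \<Longrightarrow> c i (v * 2 ^ n + a) = 0"
  shows "c i = (\<lambda>_. 0)"
proof
  fix j
  show "c i j = 0"
  proof (cases "j < 3 * 2 ^ n")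
    case True
    then show ?thesis
      by (metis assms(2) layer_decomposition)
  qed (use array_space_beyond[OF assms(1)] in simp)
qed

section \<open>The code\<close>

lemma paper_code_iff_columns:
  "c \<in> paper_code n k lam \<longleftrightarrow> c \<in> array_space n (3 * 2 ^ n) \<and>
     (\<forall>j < 3 * 2 ^ n. (\<lambda>i. c i j) \<in> vandermonde_nullspace {1..n} (\<lambda>i. lam i (bin_digit j i)) (n - k))"
  (is "_ \<longleftrightarrow> _ \<and> (\<forall>j < 3 * 2 ^ n. ?col j)")
proof -
  have layer: "?col (v * 2 ^ n + a) \<longleftrightarrow>
      (\<forall>t < n - k. (\<Sum>i = 1..n. lam i (bin_digit a i) ^ t * c i (v * 2 ^ n + a)) = 0)"
    if "a < 2 ^ n" for v a
  proof -
    have "(\<Sum>i = 1..n. lam i (bin_digit (v * 2 ^ n + a) i) ^ t * c i (v * 2 ^ n + a)) =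
        (\<Sum>i = 1..n. lam i (bin_digit a i) ^ t * c i (v * 2 ^ n + a))" for t
      using bin_digit_layer[OF that] by (intro sum.cong) simp_all
    then show ?thesis
      by (simp add: vandermonde_nullspace_def)
  qed
  show ?thesis
  proof (intro iffI conjI allI impI)
    assume c: "c \<in> paper_code n k lam"
    then show "c \<in> array_space n (3 * 2 ^ n)"
      by (simp add: paper_code_def)
    fix j :: nat
    assume "j < 3 * 2 ^ n"
    then obtain v a where "v < 3" and "a < 2 ^ n" and j: "j = v * 2 ^ n + a"
      by (rule layer_decomposition)
    have "Suc v \<in> {1, 2, 3}"
      using \<open>v < 3\<close> by auto
    then have "\<forall>t < n - k. (\<Sum>i = 1..n. lam i (bin_digit a i) ^ t * c i ((Suc v - 1) * 2 ^ n + a)) = 0"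
      using c \<open>a < 2 ^ n\<close> unfolding paper_code_def by blast
    then show "?col j"
      using layer[OF \<open>a < 2 ^ n\<close>] j by simp
  next
    assume c: "c \<in> array_space n (3 * 2 ^ n) \<and> (\<forall>j < 3 * 2 ^ n. ?col j)"
    have sums: "(\<Sum>i = 1..n. lam i (bin_digit a i) ^ t * c i ((b - 1) * 2 ^ n + a)) = 0"
      if "t < n - k" and "b \<in> {1, 2, 3}" and "a < 2 ^ n" for t b a
    proof -
      have "(b - 1) * 2 ^ n + a < 3 * 2 ^ n"
        using that by auto
      then show ?thesis
        using c layer[OF \<open>a < 2 ^ n\<close>, of "b - 1"] \<open>t < n - k\<close> by blast
    qed
    show "c \<in> paper_code n k lam"
      unfolding paper_code_def using c sums by blast
  qed
qed

lemma paper_code_diff: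
  "c \<in> paper_code n k lam \<Longrightarrow> c' \<in> paper_code n k lam \<Longrightarrow> c - c' \<in> paper_code n k lam"
  by (auto simp: paper_code_def array_space_def right_diff_distrib sum_subtractf)

lemma paper_code_subspace: "fscale.subspace (paper_code n k lam)"
  unfolding fscale.subspace_def
proof (intro conjI ballI allI)
  show "0 \<in> paper_code n k lam"
    by (simp add: paper_code_def array_space_def)
  fix c c' assume "c \<in> paper_code n k lam" and "c' \<in> paper_code n k lam"
  then show "c + c' \<in> paper_code n k lam"
    by (auto simp: paper_code_def array_space_def distrib_left sum.distrib)
next
  fix x c assume "c \<in> paper_code n k lam"
  then show "fscale x c \<in> paper_code n k lam"
    by (auto simp: paper_code_def array_space_def fscale_def mult.left_commute
        simp flip: sum_distrib_left)
qed

locale cooperative_msr_code =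
  fixes n k :: nat and lam :: "nat \<Rightarrow> nat \<Rightarrow> 'f::field"
  assumes k_less_n: "k < n"
    and lam_inj: "inj_on (\<lambda>(i, u). lam i u) ({1..n} \<times> {0, 1})"
begin

lemma lam_eq_iff:
  assumes "i \<in> {1..n}" and "i' \<in> {1..n}" and "u \<le> 1" and "u' \<le> 1"
  shows "lam i u = lam i' u' \<longleftrightarrow> i = i' \<and> u = u'"
  using inj_onD[OF lam_inj, of "(i, u)" "(i', u')"] assms by (auto simp: le_Suc_eq)

lemma column_points_inj: "inj_on (\<lambda>i. lam i (bin_digit j i)) {1..n}"
  by (rule inj_onI) (metis lam_eq_iff bin_digit_le_1)

lemma paper_code_determined:
  assumes "K \<subseteq> {1..n}" and "card K = k" and c: "c \<in> paper_code n k lam"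
    and c': "c' \<in> paper_code n k lam" and agree: "\<forall>i\<in>K. \<forall>j < 3 * 2 ^ n. c i j = c' i j"
  shows "c = c'"
proof (intro ext)
  fix i j
  have d: "c - c' \<in> paper_code n k lam"
    using c c' by (rule paper_code_diff)
  show "c i j = c' i j"
  proof (cases "j < 3 * 2 ^ n")
    case True
    have "card {i\<in>{1..n}. c i j - c' i j \<noteq> 0} \<le> card ({1..n} - K)"
      using agree True by (intro card_mono) auto
    also have "\<dots> = n - k"
      using assms(1,2) by (simp add: card_Diff_subset finite_subset)
    finally have supp: "card {i\<in>{1..n}. c i j - c' i j \<noteq> 0} \<le> n - k" .
    have "(\<lambda>i. c i j - c' i j) \<in> vandermonde_nullspace {1..n} (\<lambda>i. lam i (bin_digit j i)) (n - k)"
      using d True unfolding paper_code_iff_columns by simp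
    from vandermonde_nullspace_eq_zero[OF _ column_points_inj this supp]
    have "i \<in> {1..n} \<Longrightarrow> c i j = c' i j"
      by simp
    moreover have "i \<notin> {1..n} \<Longrightarrow> c i j = c' i j"
      using c c' by (simp add: paper_code_def array_space_def)
    ultimately show ?thesis
      by (cases "i \<in> {1..n}") auto
  next
    case False
    then show ?thesis
      using c c' by (simp add: paper_code_def array_space_def)
  qed
qed

lemma paper_code_free_on:
  assumes "finite (UNIV :: 'f set)" and "K \<subseteq> {1..n}" and "card K = k"
  shows "free_on K (3 * 2 ^ n) (paper_code n k lam)"
  unfolding free_on_def
proof
  fix v :: "nat \<Rightarrow> nat \<Rightarrow> 'f"
  have "card ({1..n} - K) = n - k"
    using card_Diff_subset[OF finite_subset[OF assms(2) finite_atLeastAtMost] assms(2)] assms(3) by simp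
  then have "\<exists>z. z \<in> vandermonde_nullspace {1..n} (\<lambda>i. lam i (bin_digit j i)) (n - k) \<and>
      (\<forall>i\<in>K. z i = v i j)" for j
    by (rule vandermonde_nullspace_extend[OF assms(1) finite_atLeastAtMost assms(2) column_points_inj]) auto
  then obtain z where z: "z j \<in> vandermonde_nullspace {1..n} (\<lambda>i. lam i (bin_digit j i)) (n - k)"
    and z_K: "\<forall>i\<in>K. z j i = v i j" for j
    by metis
  define c where "c i j = (if i \<in> {1..n} \<and> j < 3 * 2 ^ n then z j i else 0)" for i j
  have "(\<lambda>i. c i j) \<in> vandermonde_nullspace {1..n} (\<lambda>i. lam i (bin_digit j i)) (n - k)"
    if "j < 3 * 2 ^ n" for j
    using z[of j] that by (simp add: c_def vandermonde_nullspace_def)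
  then have "c \<in> paper_code n k lam"
    unfolding paper_code_iff_columns by (auto simp: array_space_def c_def)
  moreover have "\<forall>i\<in>K. \<forall>j < 3 * 2 ^ n. c i j = v i j"
    using z_K assms(2) by (auto simp: c_def)
  ultimately show "\<exists>c\<in>paper_code n k lam. \<forall>i\<in>K. \<forall>j < 3 * 2 ^ n. c i j = v i j"
    by blast
qed

lemma paper_code_MDS:
  assumes "finite (UNIV :: 'f set)"
  shows "MDS_array_code n k (3 * 2 ^ n) (paper_code n k lam)"
proof -
  have K: "{1..k} \<subseteq> {1..n}" "card {1..k} = k"
    using k_less_n by auto
  have "fscale.dim (paper_code n k lam) = card {1..k} * (3 * 2 ^ n)"
    by (rule dim_array_code[OF paper_code_subspace finite_atLeastAtMost
          paper_code_free_on[OF assms K] paper_code_determined[OF K]])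
  moreover have "c = c'" if "K \<subseteq> {1..n}" and "card K = k" and "c \<in> paper_code n k lam"
    and "c' \<in> paper_code n k lam" and "\<forall>i\<in>K. c i = c' i" for K c c'
    using paper_code_determined[OF that(1-4)] that(5) by simp
  ultimately show ?thesis
    unfolding MDS_array_code_def using paper_code_subspace by (auto simp: paper_code_def)
qed

text \<open>This is where the structure of the code enters: the sum of two columns whose indices
  differ exactly in digit u, extended by the two symbols of node u, is a word of a Vandermonde
  nullspace with n + 1 distinct points.\<close>

lemma paper_code_pair_columns:
  assumes c: "c \<in> paper_code n k lam" and "p < 3 * 2 ^ n" and "q < 3 * 2 ^ n" and "u \<in> {1..n}"
    and digits: "\<And>i. i \<in> {1..n} \<Longrightarrow>
      bin_digit q i = (if i = u then 1 - bin_digit p i else bin_digit p i)"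
    and "S \<subseteq> {1..n} - {u}" and "card S = k + 1" and sum_S: "\<forall>i\<in>S. c i p + c i q = 0"
  shows "c u p = 0" and "c u q = 0" and "\<forall>i\<in>{1..n} - {u}. c i p + c i q = 0"
proof -
  let ?P = "\<lambda>i. lam i (bin_digit p i)" and ?Q = "lam u (bin_digit q u)"
  have Q: "?Q \<notin> ?P ` {1..n}"
  proof
    assume "?Q \<in> ?P ` {1..n}"
    then obtain i where "i \<in> {1..n}" and "?Q = ?P i"
      by auto
    then have "i = u" and "bin_digit q u = bin_digit p u"
      using lam_eq_iff[OF \<open>u \<in> {1..n}\<close> \<open>i \<in> {1..n}\<close> bin_digit_le_1 bin_digit_le_1] by auto
    then show False
      using digits[OF \<open>u \<in> {1..n}\<close>] bin_digit_le_1[of p u] by arith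
  qed
  have y: "(\<lambda>i. c i p) \<in> vandermonde_nullspace {1..n} ?P (n - k)"
    using c \<open>p < 3 * 2 ^ n\<close> by (simp add: paper_code_iff_columns)
  have z: "(\<lambda>i. c i q) \<in> vandermonde_nullspace {1..n} (?P(u := ?Q)) (n - k)"
  proof -
    have "(\<lambda>i. c i q) \<in> vandermonde_nullspace {1..n} (\<lambda>i. lam i (bin_digit q i)) (n - k)"
      using c \<open>q < 3 * 2 ^ n\<close> by (simp add: paper_code_iff_columns)
    also have "\<dots> = vandermonde_nullspace {1..n} (?P(u := ?Q)) (n - k)"
      using digits by (intro vandermonde_nullspace_cong) simp
    finally show ?thesis .
  qed
  have "card {1..n} < card S + (n - k)"
    using \<open>card S = k + 1\<close> k_less_n by simp
  from vandermonde_nullspace_pair[OF finite_atLeastAtMost \<open>u \<in> {1..n}\<close> column_points_inj Q y z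
      \<open>S \<subseteq> {1..n} - {u}\<close> this sum_S]
  show "c u p = 0" and "c u q = 0" and "\<forall>i\<in>{1..n} - {u}. c i p + c i q = 0"
    by simp_all
qed

end

section \<open>The repair scheme\<close>

definition query1 :: "nat \<Rightarrow> nat \<Rightarrow> nat \<Rightarrow> (nat \<Rightarrow> 'f::plus) \<Rightarrow> 'f" where
  "query1 n i1 a x = x (bin_digit a i1 * 2 ^ n + a) + x (bin_digit a i1 * 2 ^ n + flip_digit i1 a)"

definition query2 :: "nat \<Rightarrow> nat \<Rightarrow> nat \<Rightarrow> nat \<Rightarrow> (nat \<Rightarrow> 'f::plus) \<Rightarrow> 'f" where
  "query2 n i1 i2 a x = x (2 * 2 ^ n + a) + x (bin_digit a i1 * 2 ^ n + flip_digit i2 a)"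

lemma query1_diff: "query1 n i1 a (x - y) = query1 n i1 a x - query1 n i1 a (y :: nat \<Rightarrow> 'f::ab_group_add)"
  by (simp add: query1_def)

lemma query2_diff: "query2 n i1 i2 a (x - y) = query2 n i1 i2 a x - query2 n i1 i2 a (y :: nat \<Rightarrow> 'f::ab_group_add)"
  by (simp add: query2_def)

locale cooperative_repair = cooperative_msr_code n k lam
  for n k :: nat and lam :: "nat \<Rightarrow> nat \<Rightarrow> 'f::field" +
  fixes i1 i2 :: nat and Rs :: "nat set"
  assumes i1: "i1 \<in> {1..n}" and i2: "i2 \<in> {1..n}" and i1_neq_i2: "i1 \<noteq> i2"
    and helpers: "Rs \<subseteq> {1..n} - {i1, i2}" and card_helpers: "card Rs = k + 1"
begin

lemma query1_download:
  assumes d: "d \<in> paper_code n k lam" and zero: "\<forall>a < 2 ^ n. \<forall>j\<in>Rs. query1 n i1 a (d j) = 0"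
  shows "\<forall>a < 2 ^ n. query1 n i1 a (d i2) = 0" and "\<forall>v < 2. \<forall>a < 2 ^ n. d i1 (v * 2 ^ n + a) = 0"
proof -
  have pair: "d i1 (bin_digit a i1 * 2 ^ n + a) = 0 \<and> d i1 (bin_digit a i1 * 2 ^ n + flip_digit i1 a) = 0
      \<and> query1 n i1 a (d i2) = 0" if "a < 2 ^ n" for a
  proof -
    let ?v = "bin_digit a i1"
    have "?v < 3"
      using bin_digit_le_1[of a i1] by simp
    note pair_columns = paper_code_pair_columns[OF d layer_less[OF this that]
        layer_less[OF this flip_digit_less[OF that i1]] i1 bin_digit_flip_layer[OF that i1]]
    have "Rs \<subseteq> {1..n} - {i1}" and "i2 \<in> {1..n} - {i1}"
      using helpers i2 i1_neq_i2 by auto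
    with pair_columns zero that card_helpers show ?thesis
      by (simp add: query1_def)
  qed
  then show "\<forall>a < 2 ^ n. query1 n i1 a (d i2) = 0"
    by blast
  show "\<forall>v < 2. \<forall>a < 2 ^ n. d i1 (v * 2 ^ n + a) = 0"
  proof (intro allI impI)
    fix v a :: nat assume "v < 2" and "a < 2 ^ n"
    show "d i1 (v * 2 ^ n + a) = 0"
    proof (cases "bin_digit a i1 = v")
      case True
      then show ?thesis
        using pair[OF \<open>a < 2 ^ n\<close>] by simp
    next
      case False
      then have "bin_digit (flip_digit i1 a) i1 = v"
        using \<open>v < 2\<close> i1 bin_digit_le_1[of a i1] by (simp add: bin_digit_flip_digit)
      then show ?thesis
        using pair[OF flip_digit_less[OF \<open>a < 2 ^ n\<close> i1]] by simp
    qed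
  qed
qed

lemma query2_download:
  assumes d: "d \<in> paper_code n k lam" and zero: "\<forall>a < 2 ^ n. \<forall>j\<in>Rs. query2 n i1 i2 a (d j) = 0"
  shows "\<forall>a < 2 ^ n. query2 n i1 i2 a (d i1) = 0"
    and "\<forall>a < 2 ^ n. d i2 (2 * 2 ^ n + a) = 0 \<and> d i2 (bin_digit a i1 * 2 ^ n + a) = 0"
proof -
  have pair: "d i2 (2 * 2 ^ n + a) = 0 \<and> d i2 (bin_digit a i1 * 2 ^ n + flip_digit i2 a) = 0
      \<and> query2 n i1 i2 a (d i1) = 0" if "a < 2 ^ n" for a
  proof -
    have "bin_digit a i1 < 3" and "(2 :: nat) < 3"
      using bin_digit_le_1[of a i1] by simp_all
    note pair_columns = paper_code_pair_columns[OF d layer_less[OF \<open>2 < 3\<close> that]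
        layer_less[OF \<open>bin_digit a i1 < 3\<close> flip_digit_less[OF that i2]] i2
        bin_digit_flip_layer[OF that i2]]
    have "Rs \<subseteq> {1..n} - {i2}" and "i1 \<in> {1..n} - {i2}"
      using helpers i1 i1_neq_i2 by auto
    with pair_columns zero that card_helpers show ?thesis
      by (simp add: query2_def)
  qed
  then show "\<forall>a < 2 ^ n. query2 n i1 i2 a (d i1) = 0"
    by blast
  show "\<forall>a < 2 ^ n. d i2 (2 * 2 ^ n + a) = 0 \<and> d i2 (bin_digit a i1 * 2 ^ n + a) = 0"
  proof (intro allI impI conjI)
    fix a :: nat assume "a < 2 ^ n"
    then show "d i2 (2 * 2 ^ n + a) = 0"
      using pair by blast
    have "bin_digit (flip_digit i2 a) i1 = bin_digit a i1"
      using i1 i2 i1_neq_i2 by (simp add: bin_digit_flip_digit)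
    then show "d i2 (bin_digit a i1 * 2 ^ n + a) = 0"
      using pair[OF flip_digit_less[OF \<open>a < 2 ^ n\<close> i2]] by simp
  qed
qed

lemma node1_recovery:
  assumes d: "d \<in> paper_code n k lam" and "\<forall>a < 2 ^ n. \<forall>j\<in>Rs. query1 n i1 a (d j) = 0"
    and received: "\<forall>a < 2 ^ n. query2 n i1 i2 a (d i1) = 0"
  shows "d i1 = (\<lambda>_. 0)"
proof (rule array_node_eq_zero)
  show "d \<in> array_space n (3 * 2 ^ n)"
    using d by (simp add: paper_code_def)
  have low: "d i1 (v * 2 ^ n + a) = 0" if "v < 2" and "a < 2 ^ n" for v a
    using query1_download(2)[OF assms(1,2)] that by blast
  fix v a :: nat assume "v < 3" and "a < 2 ^ n"
  show "d i1 (v * 2 ^ n + a) = 0"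
  proof (cases "v < 2")
    case False
    then have "v = 2"
      using \<open>v < 3\<close> by simp
    have "bin_digit a i1 < 2"
      using bin_digit_le_1[of a i1] by simp
    then have "d i1 (bin_digit a i1 * 2 ^ n + flip_digit i2 a) = 0"
      using low flip_digit_less[OF \<open>a < 2 ^ n\<close> i2] by blast
    moreover have "query2 n i1 i2 a (d i1) = 0"
      using received \<open>a < 2 ^ n\<close> by blast
    ultimately show ?thesis
      using \<open>v = 2\<close> by (simp add: query2_def)
  qed (use low \<open>a < 2 ^ n\<close> in blast)
qed

lemma node2_recovery:
  assumes d: "d \<in> paper_code n k lam" and "\<forall>a < 2 ^ n. \<forall>j\<in>Rs. query2 n i1 i2 a (d j) = 0"
    and received: "\<forall>a < 2 ^ n. query1 n i1 a (d i2) = 0"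
  shows "d i2 = (\<lambda>_. 0)"
proof (rule array_node_eq_zero)
  show "d \<in> array_space n (3 * 2 ^ n)"
    using d by (simp add: paper_code_def)
  note known = query2_download(2)[OF assms(1,2)]
  fix v a :: nat assume "v < 3" and "a < 2 ^ n"
  show "d i2 (v * 2 ^ n + a) = 0"
  proof (cases "v = 2 \<or> v = bin_digit a i1")
    case True
    then show ?thesis
      using known \<open>a < 2 ^ n\<close> by auto
  next
    case False
    \<comment> \<open>The query of node i1 pairs this symbol with one that node i2 already knows.\<close>
    define a' where "a' = flip_digit i1 a"
    have "a' < 2 ^ n" and "bin_digit a' i1 = v" and "flip_digit i1 a' = a"
      using False \<open>v < 3\<close> flip_digit_less[OF \<open>a < 2 ^ n\<close> i1] i1 bin_digit_le_1[of a i1]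
      by (auto simp: a'_def bin_digit_flip_digit)
    moreover have "query1 n i1 a' (d i2) = 0"
      using received \<open>a' < 2 ^ n\<close> by blast
    moreover have "d i2 (bin_digit a' i1 * 2 ^ n + a') = 0"
      using known \<open>a' < 2 ^ n\<close> by blast
    ultimately show ?thesis
      by (simp add: query1_def)
  qed
qed

text \<open>Each failed node i asks every other node for the same 2^n linear combinations
  query i of its content; node i1 can then compute the answers of node i2 to its own query
  and forward them, and vice versa.\<close>

lemma paper_code_coop_repairable:
  "coop_repairable (paper_code n k lam) {i1, i2} Rs (2 * (k + 2) * 2 ^ n)"
proof -
  let ?C = "paper_code n k lam"
  define query :: "nat \<Rightarrow> nat \<Rightarrow> (nat \<Rightarrow> 'f) \<Rightarrow> 'f"
    where "query i = (if i = i1 then query1 n i1 else query2 n i1 i2)" for i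
  define g :: "nat \<Rightarrow> nat \<Rightarrow> (nat \<Rightarrow> 'f) \<Rightarrow> 'f list"
    where "g j i x = map (\<lambda>a. query i a x) [0..<2 ^ n]" for j i x
  define msg :: "nat \<Rightarrow> nat \<Rightarrow> (nat \<Rightarrow> nat \<Rightarrow> 'f) \<Rightarrow> 'f list"
    where "msg i i' c = map (\<lambda>a. query i a (c i')) [0..<2 ^ n]" for i i' c
  have query_diff: "query i a (x - y) = query i a x - query i a y" for i a x y
    by (simp add: query_def query1_diff query2_diff)
  have download_eq: "downloaded g Rs i c = downloaded g Rs i c' \<longleftrightarrow>
      (\<forall>a < 2 ^ n. \<forall>j\<in>Rs. query i a ((c - c') j) = 0)" for i c c'
    by (auto simp: downloaded_def g_def fun_eq_iff query_diff)
  have msg_eq: "msg i i' c = msg i i' c' \<longleftrightarrow> (\<forall>a < 2 ^ n. query i a ((c - c') i') = 0)" for i i' c c'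
    by (auto simp: msg_def query_diff)
  have "coop_repairable ?C {i1, i2} Rs (repair_bandwidth {i1, i2} Rs (\<lambda>_ _. 2 ^ n) (\<lambda>_ _. 2 ^ n))"
  proof (rule coop_repairable_if_determined)
    fix i i' c c'
    assume "i \<in> {i1, i2}" "i' \<in> {i1, i2}" "i \<noteq> i'" "c \<in> ?C" "c' \<in> ?C"
      and "downloaded g Rs i c = downloaded g Rs i c'"
    then show "msg i i' c = msg i i' c'"
      using query1_download(1)[OF paper_code_diff] query2_download(1)[OF paper_code_diff] i1_neq_i2
      unfolding download_eq msg_eq query_def by auto
  next
    fix i c c'
    assume "i \<in> {i1, i2}" and "c \<in> ?C" and "c' \<in> ?C"
      and download: "downloaded g Rs i c = downloaded g Rs i c'"
      and received: "\<And>i'. i' \<in> {i1, i2} - {i} \<Longrightarrow> msg i' i c = msg i' i c'"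
    have d: "c - c' \<in> ?C"
      using \<open>c \<in> ?C\<close> \<open>c' \<in> ?C\<close> by (rule paper_code_diff)
    from \<open>i \<in> {i1, i2}\<close> consider "i = i1" | "i = i2"
      by blast
    then have "(c - c') i = (\<lambda>_. 0)"
    proof cases
      case 1
      then show ?thesis
        using node1_recovery[OF d] download received[of i2] i1_neq_i2
        unfolding download_eq msg_eq query_def by simp
    next
      case 2
      then show ?thesis
        using node2_recovery[OF d] download received[of i1] i1_neq_i2
        unfolding download_eq msg_eq query_def by simp
    qed
    then show "c i = c' i"
      by (simp add: fun_eq_iff)
  qed (simp_all add: g_def msg_def)
  moreover have "repair_bandwidth {i1, i2} Rs (\<lambda>_ _. 2 ^ n) (\<lambda>_ _. 2 ^ n) = 2 * (k + 2) * 2 ^ n"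
    using i1_neq_i2 card_helpers by (simp add: repair_bandwidth_def insert_Diff_if)
  ultimately show ?thesis
    by simp
qed

end

context cooperative_msr_code
begin

lemma paper_code_N_co:
  assumes "finite (UNIV :: 'f set)" and "1 \<le> k"
    and "Fs \<subseteq> {1..n}" and "card Fs = 2" and "Rs \<subseteq> {1..n} - Fs" and "card Rs = k + 1"
  shows "N_co (paper_code n k lam) Fs Rs = 2 * (k + 2) * 2 ^ n"
proof -
  obtain i1 i2 where Fs: "Fs = {i1, i2}" and "i1 \<noteq> i2"
    using \<open>card Fs = 2\<close> by (meson card_2_iff)
  interpret cooperative_repair n k lam i1 i2 Rs
    using assms(3-6) Fs \<open>i1 \<noteq> i2\<close> by unfold_locales auto
  have sub: "paper_code n k lam \<subseteq> array_space n (3 * 2 ^ n)"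
    by (auto simp: paper_code_def)
  have free: "\<forall>K. K \<subseteq> {1..n} \<and> card K = k \<longrightarrow> free_on K (3 * 2 ^ n) (paper_code n k lam)"
    using paper_code_free_on[OF assms(1)] by blast
  have "2 * (k + 2) * 2 ^ n \<le> N" if "coop_repairable (paper_code n k lam) Fs Rs N" for N
  proof -
    have "3 * (2 * (k + 2) * 2 ^ n) \<le> 3 * N"
      using coop_bandwidth_two_failures_lower_bound[OF assms(1) sub free assms(2) \<open>Fs \<subseteq> {1..n}\<close>
          \<open>card Fs = 2\<close> \<open>Rs \<subseteq> {1..n} - Fs\<close> \<open>card Rs = k + 1\<close> that]
      by (simp add: algebra_simps)
    then show ?thesis
      by simp
  qed
  then show ?thesis
    unfolding N_co_def using paper_code_coop_repairable Fs by (intro Least_equality) auto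
qed

end

theorem mainTheorem1:
  fixes n k :: nat and lam :: "nat \<Rightarrow> nat \<Rightarrow> 'f::field"
  assumes "finite (UNIV :: 'f set)"
    and "1 \<le> k" and "k < n"
    and "card (UNIV :: 'f set) \<ge> 2 * n"
    and "inj_on (\<lambda>(i, j). lam i j) ({1..n} \<times> {0, 1})"
  shows "MSR_coop n k (3 * 2 ^ n) 2 (k + 1) (paper_code n k lam)"
proof -
  interpret cooperative_msr_code n k lam
    using assms(3,5) by unfold_locales
  show ?thesis
    using paper_code_MDS[OF assms(1)] paper_code_N_co[OF assms(1,2)] by (simp add: MSR_coop_def)
qed

end
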